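(* Let $n \geq 2$ and let $X_1, \dots, X_n$ be mutually independent nonnegative random variables with survival functions $\overline{F}_i(x) = \mathbb{P}(X_i > x)$, $i = 1, \dots, n$. Let $\boldsymbol{\theta} = (\theta_1, \dots, \theta_n) \in (0,1)^n$ with $\sum_{i=1}^n \theta_i = 1$, and let $\mathbf{I} = (I_1, \dots, I_n) \sim \mathrm{Categorical}(\boldsymbol{\theta})$ be independent of $X_1, \dots, X_n$. Suppose that for each $i \in \{1,\dots,n\}$ and every subset $\mu$ with $\{i\} \subseteq \mu \subsetneq \{1, \dots, n\}$, the condition $$\theta_{\mu} \, \overline{F}_i(x) \leq \overline{F}_i(x/\theta_{\mu}) \quad \text{for all } x \geq 0$$ is satisfied, where $\theta_\mu = \sum_{j \in \mu} \theta_j$. Then $$I_1 X_1 + \dots + I_n X_n \leq_{\mathrm{st}} \theta_1 X_1 + \dots + \theta_n X_n.$$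
   Context: $\mathbf{I} \sim \mathrm{Categorical}(\boldsymbol{\theta})$ means that almost surely exactly one component of $\mathbf{I}$ equals $1$ and all others equal $0$, with $\mathbb{P}(I_i = 1) = \theta_i$. For random variables $X, Y$, $X \leq_{\mathrm{st}} Y$ (first-order stochastic dominance) means $\mathbb{P}(X > x) \leq \mathbb{P}(Y > x)$ for all $x \in \mathbb{R}$. For a nonempty $\mu \subseteq \{1,\dots,n\}$, $\theta_\mu := \sum_{j\in\mu}\theta_j$. *)

theory Defs
  imports "HOL-Probability.Probability"
begin

definition theta_sum :: "(nat \<Rightarrow> real) \<Rightarrow> nat set \<Rightarrow> real" where
  "theta_sum \<theta> \<mu> = (\<Sum>j\<in>\<mu>. \<theta> j)"

end

(*
  Conditioning on I gives P(I_1 X_1 + ... + I_n X_n > x) <= sum_i theta_i P(X_i > x), so for x >= 0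
  it suffices to show sum_i theta_i c_i <= P(theta_1 X_1 + ... + theta_n X_n > x), c_i = P(X_i > x).
  Call a nonempty mu good if X_i > x / theta_mu for all i in mu; if a good mu exists, the weighted
  sum exceeds x.  Replacing X_i by its level, the least threshold t in {theta_mu | i in mu} with
  X_i > x / t, the existence of a good mu becomes an event about independent discrete levels whose
  distribution functions dominate t -> c_i t by hypothesis.  The event is monotone in the levels,
  so its probability can only drop if the levels are replaced by ones with distribution functions
  exactly t -> c_i t.  For those it is computed by decomposing according to the largest good set,
  and an Abel-type polynomial identity shows that it equals sum_i theta_i c_i.
*)
theory Submission
  imports Defs
begin

lemma theta_sum_empty [simp]: "theta_sum \<theta> {} = 0"
  by (simp add: theta_sum_def)

lemma theta_sum_Un_disjoint:
  "finite \<nu> \<Longrightarrow> finite \<nu>' \<Longrightarrow> \<nu> \<inter> \<nu>' = {} \<Longrightarrow>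
    theta_sum \<theta> (\<nu> \<union> \<nu>') = theta_sum \<theta> \<nu> + theta_sum \<theta> \<nu>'"
  unfolding theta_sum_def by (rule sum.union_disjoint)

lemma theta_sum_mono:
  "finite \<nu>' \<Longrightarrow> \<nu> \<subseteq> \<nu>' \<Longrightarrow> (\<And>i. i \<in> \<nu>' \<Longrightarrow> 0 \<le> \<theta> i) \<Longrightarrow>
    theta_sum \<theta> \<nu> \<le> theta_sum \<theta> \<nu>'"
  unfolding theta_sum_def by (intro sum_mono2) auto

section \<open>An Abel-type polynomial identity\<close>

text \<open>At \<open>z = 1\<close>, \<open>no_good_poly \<theta> c C b 1\<close> is the probability that no nonempty subset of \<open>C\<close> is
  good at offset \<open>b\<close> when the levels are independent with distribution functions \<open>t \<mapsto> c i * t\<close>.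
  The extra variable \<open>z\<close> makes the identity \<open>abel_sum_eq_power\<close> provable by differentiation.\<close>

definition no_good_poly :: "(nat \<Rightarrow> real) \<Rightarrow> (nat \<Rightarrow> real) \<Rightarrow> nat set \<Rightarrow> real \<Rightarrow> real \<Rightarrow> real" where
  "no_good_poly \<theta> c C b z =
     (\<Prod>k\<in>C. z - b * c k) - (\<Sum>i\<in>C. \<theta> i * c i * (\<Prod>k\<in>C - {i}. z - b * c k))"

definition abel_sum :: "(nat \<Rightarrow> real) \<Rightarrow> (nat \<Rightarrow> real) \<Rightarrow> nat set \<Rightarrow> real \<Rightarrow> real \<Rightarrow> real" where
  "abel_sum \<theta> c B a z = (\<Sum>\<nu>\<in>Pow B. (a + theta_sum \<theta> \<nu>) ^ card \<nu> * (\<Prod>i\<in>\<nu>. c i)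
       * no_good_poly \<theta> c (B - \<nu>) (a + theta_sum \<theta> \<nu>) z)"

lemma no_good_poly_empty [simp]: "no_good_poly \<theta> c {} b z = 1"
  by (simp add: no_good_poly_def)

lemma no_good_poly_deriv:
  assumes "finite C"
  shows "(no_good_poly \<theta> c C b has_real_derivative (\<Sum>k\<in>C. no_good_poly \<theta> c (C - {k}) b z)) (at z)"
proof -
  let ?p = "\<lambda>D. \<Prod>y\<in>D. z - b * c y"
  have prod_deriv: "((\<lambda>z. \<Prod>k\<in>D. z - b * c k) has_real_derivative (\<Sum>k\<in>D. ?p (D - {k}))) (at z)"
    if "finite D" for D
    using has_field_derivative_prod[of D "\<lambda>k z. z - b * c k" "\<lambda>_. 1" z] that
    by (simp add: DERIV_diff[OF DERIV_ident DERIV_const, simplified])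
  have swap: "(\<Sum>i\<in>C. \<Sum>k\<in>C - {i}. h i k) = (\<Sum>k\<in>C. \<Sum>i\<in>C - {k}. h i k)"
    for h :: "nat \<Rightarrow> nat \<Rightarrow> real"
  proof -
    have "(\<Sum>i\<in>C. \<Sum>k\<in>C - {i}. h i k) = (\<Sum>i\<in>C. \<Sum>k\<in>{k \<in> C. i \<noteq> k}. h i k)"
      by (intro sum.cong) auto
    also have "\<dots> = (\<Sum>k\<in>C. \<Sum>i\<in>{i \<in> C. i \<noteq> k}. h i k)"
      by (rule sum.swap_restrict[OF assms assms])
    also have "\<dots> = (\<Sum>k\<in>C. \<Sum>i\<in>C - {k}. h i k)"
      by (intro sum.cong) auto
    finally show ?thesis .
  qed
  have pair: "C - {i} - {k} = C - {i, k}" for i k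
    by auto
  have "(\<Sum>i\<in>C. \<theta> i * c i * (\<Sum>k\<in>C - {i}. ?p (C - {i} - {k})))
      = (\<Sum>i\<in>C. \<Sum>k\<in>C - {i}. \<theta> i * c i * ?p (C - {i, k}))"
    by (simp only: sum_distrib_left pair)
  also have "\<dots> = (\<Sum>k\<in>C. \<Sum>i\<in>C - {k}. \<theta> i * c i * ?p (C - {i, k}))"
    by (rule swap)
  also have "\<dots> = (\<Sum>k\<in>C. \<Sum>i\<in>C - {k}. \<theta> i * c i * ?p (C - {k} - {i}))"
    by (simp only: pair insert_commute)
  finally have swapped: "(\<Sum>i\<in>C. \<theta> i * c i * (\<Sum>k\<in>C - {i}. ?p (C - {i} - {k})))
      = (\<Sum>k\<in>C. \<Sum>i\<in>C - {k}. \<theta> i * c i * ?p (C - {k} - {i}))" .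
  have "(no_good_poly \<theta> c C b has_real_derivative
      (\<Sum>k\<in>C. ?p (C - {k})) - (\<Sum>i\<in>C. \<theta> i * c i * (\<Sum>k\<in>C - {i}. ?p (C - {i} - {k})))) (at z)"
    unfolding no_good_poly_def[abs_def] using assms
    by (intro DERIV_diff DERIV_sum DERIV_cmult prod_deriv) auto
  then show ?thesis
    unfolding swapped by (simp add: no_good_poly_def sum_subtractf)
qed

lemma abel_sum_deriv:
  assumes "finite B"
  shows "(abel_sum \<theta> c B a has_real_derivative (\<Sum>k\<in>B. abel_sum \<theta> c (B - {k}) a z)) (at z)"
proof -
  let ?y = "\<lambda>\<nu>. a + theta_sum \<theta> \<nu>"
  let ?K = "\<lambda>\<nu>. ?y \<nu> ^ card \<nu> * (\<Prod>i\<in>\<nu>. c i)"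
  let ?q = "\<lambda>\<nu> k. ?K \<nu> * no_good_poly \<theta> c (B - {k} - \<nu>) (?y \<nu>) z"
  have deriv: "(abel_sum \<theta> c B a has_real_derivative
      (\<Sum>\<nu>\<in>Pow B. ?K \<nu> * (\<Sum>k\<in>B - \<nu>. no_good_poly \<theta> c (B - \<nu> - {k}) (?y \<nu>) z))) (at z)"
    unfolding abel_sum_def[abs_def] using assms
    by (intro DERIV_sum DERIV_cmult no_good_poly_deriv) (auto intro: finite_subset)
  have sets: "B - \<nu> - {k} = B - {k} - \<nu>" "{\<nu>. \<nu> \<in> Pow B \<and> k \<notin> \<nu>} = Pow (B - {k})"
    for \<nu> k
    by auto
  have "(\<Sum>\<nu>\<in>Pow B. ?K \<nu> * (\<Sum>k\<in>B - \<nu>. no_good_poly \<theta> c (B - \<nu> - {k}) (?y \<nu>) z))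
      = (\<Sum>\<nu>\<in>Pow B. \<Sum>k\<in>B - \<nu>. ?q \<nu> k)"
    by (simp only: sum_distrib_left sets(1))
  also have "\<dots> = (\<Sum>\<nu>\<in>Pow B. \<Sum>k\<in>{k. k \<in> B \<and> k \<notin> \<nu>}. ?q \<nu> k)"
    by (intro sum.cong refl) auto
  also have "\<dots> = (\<Sum>k\<in>B. \<Sum>\<nu>\<in>{\<nu>. \<nu> \<in> Pow B \<and> k \<notin> \<nu>}. ?q \<nu> k)"
    using assms by (intro sum.swap_restrict) auto
  also have "\<dots> = (\<Sum>k\<in>B. abel_sum \<theta> c (B - {k}) a z)"
    by (simp only: sets(2) abel_sum_def)
  finally show ?thesis
    using deriv by simp
qed

lemma sum_Pow_insert_alternating:
  fixes f :: "real \<Rightarrow> real"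
  assumes fin: "finite B" and j: "j \<notin> B"
  shows "(\<Sum>\<nu>\<in>Pow (insert j B). (-1) ^ card (insert j B - \<nu>) * f (theta_sum \<theta> \<nu>))
    = (\<Sum>\<nu>\<in>Pow B. (-1) ^ card (B - \<nu>) * (f (theta_sum \<theta> \<nu> + \<theta> j) - f (theta_sum \<theta> \<nu>)))"
proof -
  let ?g = "\<lambda>\<nu>. (-1::real) ^ card (insert j B - \<nu>) * f (theta_sum \<theta> \<nu>)"
  have in_Pow: "j \<notin> \<nu>" "finite \<nu>" if "\<nu> \<in> Pow B" for \<nu>
    using that fin j finite_subset[of \<nu> B] by auto
  have "inj_on (insert j) (Pow B)"
    using j insert_ident by (fastforce simp: inj_on_def)
  then have "(\<Sum>\<nu>\<in>insert j ` Pow B. ?g \<nu>) = (\<Sum>\<nu>\<in>Pow B. ?g (insert j \<nu>))"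
    by (rule sum.reindex[unfolded comp_def])
  also have "\<dots> = (\<Sum>\<nu>\<in>Pow B. (-1) ^ card (B - \<nu>) * f (theta_sum \<theta> \<nu> + \<theta> j))"
    using j in_Pow by (intro sum.cong refl) (auto simp: theta_sum_def add.commute)
  finally have upper: "(\<Sum>\<nu>\<in>insert j ` Pow B. ?g \<nu>)
      = (\<Sum>\<nu>\<in>Pow B. (-1) ^ card (B - \<nu>) * f (theta_sum \<theta> \<nu> + \<theta> j))" .
  have "card (insert j B - \<nu>) = Suc (card (B - \<nu>))" if "\<nu> \<in> Pow B" for \<nu>
    using that fin j by (auto simp: insert_Diff_if)
  then have lower: "(\<Sum>\<nu>\<in>Pow B. ?g \<nu>) = - (\<Sum>\<nu>\<in>Pow B. (-1) ^ card (B - \<nu>) * f (theta_sum \<theta> \<nu>))"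
    by (simp add: sum_negf[symmetric])
  have "Pow B \<inter> insert j ` Pow B = {}"
    using j by auto
  then show ?thesis
    using fin upper lower
    by (simp add: Pow_insert sum.union_disjoint sum_subtractf algebra_simps)
qed

lemma sum_Pow_alternating_power_eq_0:
  assumes "finite B" "m < card B"
  shows "(\<Sum>\<nu>\<in>Pow B. (-1) ^ card (B - \<nu>) * (a + theta_sum \<theta> \<nu>) ^ m) = (0::real)"
  using assms
proof (induction B arbitrary: m rule: finite_induct)
  case empty
  then show ?case by simp
next
  case (insert j B)
  let ?s = "\<lambda>\<nu>. (-1::real) ^ card (B - \<nu>)" and ?y = "\<lambda>\<nu>. a + theta_sum \<theta> \<nu>"
  have binomial: "(y + \<theta> j) ^ m - y ^ m = (\<Sum>k<m. of_nat (m choose k) * \<theta> j ^ (m - k) * y ^ k)" for y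
    by (simp add: binomial_ring lessThan_Suc_atMost[symmetric] mult_ac)
  have "(\<Sum>\<nu>\<in>Pow (insert j B). (-1) ^ card (insert j B - \<nu>) * ?y \<nu> ^ m)
      = (\<Sum>\<nu>\<in>Pow B. ?s \<nu> * ((?y \<nu> + \<theta> j) ^ m - ?y \<nu> ^ m))"
    using sum_Pow_insert_alternating[OF insert.hyps, of "\<lambda>s. (a + s) ^ m"] by (simp add: add_ac)
  also have "\<dots> = (\<Sum>k<m. of_nat (m choose k) * \<theta> j ^ (m - k) * (\<Sum>\<nu>\<in>Pow B. ?s \<nu> * ?y \<nu> ^ k))"
    unfolding binomial by (simp add: sum_distrib_left mult_ac sum.swap[of _ "Pow B"])
  also have "\<dots> = 0"
    using insert by (intro sum.neutral) auto
  finally show ?case .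
qed

lemma no_good_poly_at_0:
  assumes "finite C" "C \<noteq> {}"
  shows "no_good_poly \<theta> c C b 0
    = (-1) ^ card C * b ^ (card C - 1) * (\<Prod>k\<in>C. c k) * (b + theta_sum \<theta> C)"
proof -
  obtain m where m: "card C = Suc m"
    using assms by (metis card_gt_0_iff gr0_implies_Suc)
  have prod_at_0: "(\<Prod>k\<in>D. 0 - b * c k) = (-1) ^ card D * b ^ card D * (\<Prod>k\<in>D. c k)" for D
  proof -
    have "(\<Prod>k\<in>D. 0 - b * c k) = (\<Prod>k\<in>D. (-b) * c k)"
      by simp
    also have "\<dots> = (-b) ^ card D * (\<Prod>k\<in>D. c k)"
      by (subst prod.distrib) simp
    finally show ?thesis
      by (simp add: power_minus[of b])
  qed
  let ?K = "(-1) ^ m * b ^ m * (\<Prod>k\<in>C. c k)"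
  have "\<theta> i * c i * (\<Prod>k\<in>C - {i}. 0 - b * c k) = \<theta> i * ?K" if "i \<in> C" for i
    using that assms m
    by (simp only: prod_at_0) (simp add: prod.remove[of C i c] card_Diff_singleton)
  then have "(\<Sum>i\<in>C. \<theta> i * c i * (\<Prod>k\<in>C - {i}. 0 - b * c k)) = (\<Sum>i\<in>C. \<theta> i * ?K)"
    by (rule sum.cong[OF refl])
  also have "\<dots> = theta_sum \<theta> C * ?K"
    by (simp add: theta_sum_def sum_distrib_right)
  finally have sum_at_0: "(\<Sum>i\<in>C. \<theta> i * c i * (\<Prod>k\<in>C - {i}. 0 - b * c k)) = theta_sum \<theta> C * ?K" .
  show ?thesis
    unfolding no_good_poly_def sum_at_0 unfolding prod_at_0 m by (simp add: algebra_simps)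
qed

lemma abel_sum_at_0:
  assumes "finite B" "B \<noteq> {}"
  shows "abel_sum \<theta> c B a 0 = 0"
proof -
  let ?y = "\<lambda>\<nu>. a + theta_sum \<theta> \<nu>"
  obtain m where m: "card B = Suc m"
    using assms by (metis card_gt_0_iff gr0_implies_Suc)
  \<comment> \<open>At \<open>z = 0\<close> each summand is one common factor times
    \<open>(-1) ^ card (B - \<nu>) * (a + \<theta>\<^sub>\<nu>) ^ (card B - 1)\<close>, and such alternating sums vanish.\<close>
  have summand: "?y \<nu> ^ card \<nu> * (\<Prod>i\<in>\<nu>. c i) * no_good_poly \<theta> c (B - \<nu>) (?y \<nu>) 0
      = (\<Prod>i\<in>B. c i) * ?y B * ((-1) ^ card (B - \<nu>) * ?y \<nu> ^ m)"
    if "\<nu> \<subseteq> B" for \<nu>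
  proof (cases "\<nu> = B")
    case True
    then show ?thesis
      by (simp add: m mult_ac)
  next
    case False
    have fin: "finite \<nu>" "finite (B - \<nu>)"
      using that assms finite_subset by auto
    have "?y \<nu> + theta_sum \<theta> (B - \<nu>) = ?y B"
      using fin that theta_sum_Un_disjoint[of \<nu> "B - \<nu>" \<theta>] by (simp add: Un_absorb1)
    then have no_good: "no_good_poly \<theta> c (B - \<nu>) (?y \<nu>) 0
        = (-1) ^ card (B - \<nu>) * ?y \<nu> ^ (card (B - \<nu>) - 1) * (\<Prod>i\<in>B - \<nu>. c i) * ?y B"
      using fin False that by (simp add: no_good_poly_at_0 add.assoc)
    have prod: "(\<Prod>i\<in>B. c i) = (\<Prod>i\<in>\<nu>. c i) * (\<Prod>i\<in>B - \<nu>. c i)"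
      using assms that by (simp add: prod.subset_diff[of \<nu> B])
    have "card \<nu> + card (B - \<nu>) = card B" "card (B - \<nu>) \<noteq> 0"
      using fin that False card_mono[OF assms(1) that] card_Diff_subset[OF fin(1) that] by auto
    then have exp: "m = card \<nu> + (card (B - \<nu>) - 1)"
      using m by linarith
    show ?thesis
      unfolding no_good prod exp power_add by (simp add: mult_ac)
  qed
  have "abel_sum \<theta> c B a 0
      = (\<Prod>i\<in>B. c i) * ?y B * (\<Sum>\<nu>\<in>Pow B. (-1) ^ card (B - \<nu>) * ?y \<nu> ^ m)"
    unfolding abel_sum_def sum_distrib_left by (intro sum.cong) (auto simp: summand)
  also have "(\<Sum>\<nu>\<in>Pow B. (-1) ^ card (B - \<nu>) * ?y \<nu> ^ m) = 0"
    using assms m by (intro sum_Pow_alternating_power_eq_0) auto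
  finally show ?thesis
    by simp
qed

text \<open>At \<open>z = 1\<close> this Abel-type identity is the law of total probability over the largest good
  subset, see \<open>prod_expectation_no_good_subset\<close>.\<close>

lemma abel_sum_eq_power:
  "finite B \<Longrightarrow> abel_sum \<theta> c B a z = z ^ card B"
proof (induction B arbitrary: z rule: finite_psubset_induct)
  case (psubset B)
  show ?case
  proof (cases "B = {}")
    case True
    then show ?thesis
      by (simp add: abel_sum_def)
  next
    case False
    let ?g = "\<lambda>z. abel_sum \<theta> c B a z - z ^ card B"
    have "(?g has_real_derivative 0) (at x)" for x
    proof -
      have "(?g has_real_derivative
          (\<Sum>k\<in>B. abel_sum \<theta> c (B - {k}) a x) - real (card B) * x ^ (card B - Suc 0)) (at x)"
        by (intro DERIV_diff abel_sum_deriv DERIV_pow psubset.hyps)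
      moreover have "abel_sum \<theta> c (B - {k}) a x = x ^ (card B - Suc 0)" if "k \<in> B" for k
      proof -
        have "B - {k} \<subset> B"
          using that by auto
        then show ?thesis
          using that psubset.IH psubset.hyps by (simp add: card_Diff_singleton)
      qed
      ultimately show ?thesis
        by simp
    qed
    then have "?g z = ?g 0"
      by (intro DERIV_isconst_all allI)
    then show ?thesis
      using abel_sum_at_0[OF psubset.hyps(1) False] False psubset.hyps(1)
      by (simp add: power_0_left)
  qed
qed

section \<open>Expectations under independent discrete weights\<close>

definition prod_expectation ::
    "nat set \<Rightarrow> (nat \<Rightarrow> real set) \<Rightarrow> (nat \<Rightarrow> real \<Rightarrow> real) \<Rightarrow> ((nat \<Rightarrow> real) \<Rightarrow> real) \<Rightarrow> real" where
  "prod_expectation B V w g = (\<Sum>l\<in>PiE B V. (\<Prod>i\<in>B. w i (l i)) * g l)"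

lemma prod_expectation_diff:
  "prod_expectation B V w (\<lambda>l. f l - g l) = prod_expectation B V w f - prod_expectation B V w g"
  unfolding prod_expectation_def by (simp add: algebra_simps sum_subtractf)

lemma prod_expectation_sum:
  "(\<Sum>\<nu>\<in>A. prod_expectation B V w (g \<nu>)) = prod_expectation B V w (\<lambda>l. \<Sum>\<nu>\<in>A. g \<nu> l)"
  unfolding prod_expectation_def by (simp add: sum_distrib_left sum.swap[of _ A])

lemma prod_expectation_one:
  assumes "finite B" "\<And>i. i \<in> B \<Longrightarrow> finite (V i)" "\<And>i. i \<in> B \<Longrightarrow> (\<Sum>v\<in>V i. w i v) = 1"
  shows "prod_expectation B V w (\<lambda>l. 1) = 1"
  using assms by (simp add: prod_expectation_def prod_sum_PiE[of B V w, symmetric])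

lemma prod_expectation_all_le:
  assumes "finite \<nu>" "\<And>i. i \<in> \<nu> \<Longrightarrow> finite (V i)"
    and "\<And>i. i \<in> \<nu> \<Longrightarrow> (\<Sum>v\<in>{v\<in>V i. v \<le> t}. w i v) = c i * t"
  shows "prod_expectation \<nu> V w (\<lambda>l. \<Prod>i\<in>\<nu>. of_bool (l i \<le> t)) = t ^ card \<nu> * (\<Prod>i\<in>\<nu>. c i)"
proof -
  have "prod_expectation \<nu> V w (\<lambda>l. \<Prod>i\<in>\<nu>. of_bool (l i \<le> t))
      = (\<Sum>l\<in>PiE \<nu> V. \<Prod>i\<in>\<nu>. w i (l i) * of_bool (l i \<le> t))"
    unfolding prod_expectation_def by (simp add: prod.distrib)
  also have "\<dots> = (\<Prod>i\<in>\<nu>. \<Sum>v\<in>V i. w i v * of_bool (v \<le> t))"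
    by (subst prod_sum_PiE) (use assms in auto)
  also have "\<dots> = (\<Prod>i\<in>\<nu>. t * c i)"
    using assms by (intro prod.cong refl) (simp add: Int_def conj_commute mult.commute)
  finally show ?thesis
    by (simp add: prod.distrib)
qed

lemma prod_expectation_mult:
  assumes fin: "finite B" and sub: "\<nu> \<subseteq> B" and finV: "\<And>i. i \<in> B \<Longrightarrow> finite (V i)"
    and P: "\<And>l l'. (\<And>i. i \<in> \<nu> \<Longrightarrow> l i = l' i) \<Longrightarrow> P l = P l'"
    and Q: "\<And>l l'. (\<And>i. i \<in> B - \<nu> \<Longrightarrow> l i = l' i) \<Longrightarrow> Q l = Q l'"
  shows "prod_expectation B V w (\<lambda>l. P l * Q l)
    = prod_expectation \<nu> V w P * prod_expectation (B - \<nu>) V w Q"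
proof -
  let ?merge = "\<lambda>(f, g). (\<lambda>i. if i \<in> \<nu> then f i else g i)"
  let ?split = "\<lambda>l. (restrict l \<nu>, restrict l (B - \<nu>))"
  have "prod_expectation \<nu> V w P * prod_expectation (B - \<nu>) V w Q
     = (\<Sum>(f, g)\<in>PiE \<nu> V \<times> PiE (B - \<nu>) V.
          ((\<Prod>i\<in>\<nu>. w i (f i)) * P f) * ((\<Prod>i\<in>B - \<nu>. w i (g i)) * Q g))"
    unfolding prod_expectation_def sum_product sum.cartesian_product ..
  also have "\<dots> = (\<Sum>l\<in>PiE B V. (\<Prod>i\<in>B. w i (l i)) * (P l * Q l))"
  proof (rule sum.reindex_bij_witness[of _ ?split ?merge])
    fix l assume l: "l \<in> PiE B V"
    show "?merge (?split l) = l"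
      using l sub by (auto simp: PiE_def extensional_def fun_eq_iff)
    show "?split l \<in> PiE \<nu> V \<times> PiE (B - \<nu>) V"
      using l sub by (auto simp: PiE_def extensional_def)
  next
    fix fg assume fg: "fg \<in> PiE \<nu> V \<times> PiE (B - \<nu>) V"
    obtain f g where fgd: "fg = (f, g)" by force
    with fg have f: "f \<in> PiE \<nu> V" and g: "g \<in> PiE (B - \<nu>) V" by auto
    show "?split (?merge fg) = fg"
      using f g unfolding fgd by (auto simp: PiE_def extensional_def fun_eq_iff)
    show "?merge fg \<in> PiE B V"
      using f g sub unfolding fgd by (auto simp: PiE_def extensional_def Pi_def)
    have "(\<Prod>i\<in>B. w i (?merge fg i)) = (\<Prod>i\<in>\<nu>. w i (?merge fg i)) * (\<Prod>i\<in>B - \<nu>. w i (?merge fg i))"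
      using fin sub by (simp add: prod.subset_diff[of \<nu> B] mult_ac)
    also have "\<dots> = (\<Prod>i\<in>\<nu>. w i (f i)) * (\<Prod>i\<in>B - \<nu>. w i (g i))"
      unfolding fgd by (auto intro!: arg_cong2[where f="(*)"] prod.cong)
    finally have "(\<Prod>i\<in>B. w i (?merge fg i)) = (\<Prod>i\<in>\<nu>. w i (f i)) * (\<Prod>i\<in>B - \<nu>. w i (g i))" .
    moreover have "P (?merge fg) = P f" "Q (?merge fg) = Q g"
      by (intro P Q; simp add: fgd)+
    ultimately show "(\<Prod>i\<in>B. w i (?merge fg i)) * (P (?merge fg) * Q (?merge fg)) =
        (case fg of (f, g) \<Rightarrow> (\<Prod>i\<in>\<nu>. w i (f i)) * P f * ((\<Prod>i\<in>B - \<nu>. w i (g i)) * Q g))"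
      unfolding fgd by (simp add: mult_ac)
  qed
  finally show ?thesis
    unfolding prod_expectation_def by simp
qed

lemma prod_expectation_insert:
  assumes fin: "finite A" and j: "j \<notin> A"
  shows "prod_expectation (insert j A) V w g
    = (\<Sum>v\<in>V j. w j v * prod_expectation A V w (\<lambda>l. g (l(j := v))))"
proof -
  have "(\<Sum>v\<in>V j. w j v * prod_expectation A V w (\<lambda>l. g (l(j := v))))
      = (\<Sum>(v, l)\<in>V j \<times> PiE A V. w j v * ((\<Prod>i\<in>A. w i (l i)) * g (l(j := v))))"
    unfolding prod_expectation_def by (simp add: sum_distrib_left sum.cartesian_product)
  also have "\<dots> = (\<Sum>l\<in>PiE (insert j A) V. (\<Prod>i\<in>insert j A. w i (l i)) * g l)"
  proof (rule sum.reindex_bij_witness[of _ "\<lambda>l. (l j, l(j := undefined))" "\<lambda>(v, l). l(j := v)"])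
    fix l assume l: "l \<in> PiE (insert j A) V"
    show "(case (l j, l(j := undefined)) of (v, l) \<Rightarrow> l(j := v)) = l" by simp
    show "(l j, l(j := undefined)) \<in> V j \<times> PiE A V"
      using l j by (auto simp: PiE_def extensional_def Pi_def)
  next
    fix vl assume vl: "vl \<in> V j \<times> PiE A V"
    obtain v l where vld: "vl = (v, l)" by force
    with vl have v: "v \<in> V j" and l: "l \<in> PiE A V" by auto
    have lj: "l j = undefined" using l j by (auto simp: PiE_def extensional_def)
    show "((case vl of (v, l) \<Rightarrow> l(j := v)) j, (case vl of (v, l) \<Rightarrow> l(j := v))(j := undefined)) = vl"
      unfolding vld using lj by (auto simp: fun_eq_iff)
    show "(case vl of (v, l) \<Rightarrow> l(j := v)) \<in> PiE (insert j A) V"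
      unfolding vld using v l by (auto simp: PiE_def extensional_def Pi_def)
    have "(\<Prod>i\<in>A. w i ((l(j := v)) i)) = (\<Prod>i\<in>A. w i (l i))"
      using j by (intro prod.cong) auto
    then show "(\<Prod>i\<in>insert j A. w i ((case vl of (v, l) \<Rightarrow> l(j := v)) i))
          * g (case vl of (v, l) \<Rightarrow> l(j := v))
        = (case vl of (v, l) \<Rightarrow> w j v * ((\<Prod>i\<in>A. w i (l i)) * g (l(j := v))))"
      unfolding vld using fin j by simp
  qed
  finally show ?thesis
    unfolding prod_expectation_def by simp
qed

section \<open>Good subsets\<close>

definition good_set :: "(nat \<Rightarrow> real) \<Rightarrow> real \<Rightarrow> nat set \<Rightarrow> (nat \<Rightarrow> real) \<Rightarrow> bool" where
  "good_set \<theta> a \<nu> l \<longleftrightarrow> (\<forall>i\<in>\<nu>. l i \<le> a + theta_sum \<theta> \<nu>)"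

definition no_good_subset :: "(nat \<Rightarrow> real) \<Rightarrow> nat set \<Rightarrow> real \<Rightarrow> (nat \<Rightarrow> real) \<Rightarrow> bool" where
  "no_good_subset \<theta> B a l \<longleftrightarrow> (\<forall>\<nu>\<subseteq>B. \<nu> \<noteq> {} \<longrightarrow> \<not> good_set \<theta> a \<nu> l)"

text \<open>For nonnegative \<open>\<theta>\<close> the good subsets are closed under union, so this union is the largest good
  subset of \<open>B\<close> (\<open>good_set_max_good_subset\<close>).\<close>

definition max_good_subset :: "(nat \<Rightarrow> real) \<Rightarrow> nat set \<Rightarrow> real \<Rightarrow> (nat \<Rightarrow> real) \<Rightarrow> nat set" where
  "max_good_subset \<theta> B a l = \<Union>{\<nu>. \<nu> \<subseteq> B \<and> good_set \<theta> a \<nu> l}"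

lemma of_bool_good_set:
  "finite \<nu> \<Longrightarrow> of_bool (good_set \<theta> a \<nu> l) = (\<Prod>i\<in>\<nu>. of_bool (l i \<le> a + theta_sum \<theta> \<nu>) :: real)"
  unfolding good_set_def by (induction \<nu> rule: finite_induct) auto

lemma good_set_antimono:
  "good_set \<theta> a \<nu> l' \<Longrightarrow> (\<And>i. i \<in> \<nu> \<Longrightarrow> l i \<le> l' i) \<Longrightarrow> good_set \<theta> a \<nu> l"
  unfolding good_set_def by force

lemma no_good_subset_mono:
  "no_good_subset \<theta> B a l \<Longrightarrow> (\<And>i. i \<in> B \<Longrightarrow> l i \<le> l' i) \<Longrightarrow> no_good_subset \<theta> B a l'"
  unfolding no_good_subset_def using good_set_antimono by (metis subsetD)

lemma no_good_subset_cong: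
  "(\<And>i. i \<in> B \<Longrightarrow> l i = l' i) \<Longrightarrow> no_good_subset \<theta> B a l = no_good_subset \<theta> B a l'"
  unfolding no_good_subset_def good_set_def by (metis subsetD)

lemma max_good_subset_subset: "max_good_subset \<theta> B a l \<subseteq> B"
  unfolding max_good_subset_def by auto

lemma subset_max_good_subset: "\<nu> \<subseteq> B \<Longrightarrow> good_set \<theta> a \<nu> l \<Longrightarrow> \<nu> \<subseteq> max_good_subset \<theta> B a l"
  unfolding max_good_subset_def by auto

lemma good_set_max_good_subset:
  assumes "finite B" "\<And>i. i \<in> B \<Longrightarrow> 0 \<le> \<theta> i"
  shows "good_set \<theta> a (max_good_subset \<theta> B a l) l"
  unfolding good_set_def
proof
  fix i assume "i \<in> max_good_subset \<theta> B a l"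
  then obtain \<nu> where \<nu>: "\<nu> \<subseteq> B" "good_set \<theta> a \<nu> l" "i \<in> \<nu>"
    unfolding max_good_subset_def by auto
  then have "l i \<le> a + theta_sum \<theta> \<nu>"
    unfolding good_set_def by auto
  also have "theta_sum \<theta> \<nu> \<le> theta_sum \<theta> (max_good_subset \<theta> B a l)"
    using assms \<nu> max_good_subset_subset[of \<theta> B a l] finite_subset
    by (intro theta_sum_mono subset_max_good_subset) auto
  finally show "l i \<le> a + theta_sum \<theta> (max_good_subset \<theta> B a l)"
    by simp
qed

lemma good_set_Un:
  assumes fin: "finite \<nu>" "finite \<nu>'" and disj: "\<nu> \<inter> \<nu>' = {}" and nonneg: "\<And>i. i \<in> \<nu>' \<Longrightarrow> 0 \<le> \<theta> i"
    and good: "good_set \<theta> a \<nu> l" and good': "good_set \<theta> (a + theta_sum \<theta> \<nu>) \<nu>' l"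
  shows "good_set \<theta> a (\<nu> \<union> \<nu>') l"
proof -
  have sum_Un: "theta_sum \<theta> (\<nu> \<union> \<nu>') = theta_sum \<theta> \<nu> + theta_sum \<theta> \<nu>'"
    using fin disj by (rule theta_sum_Un_disjoint)
  have "0 \<le> theta_sum \<theta> \<nu>'"
    unfolding theta_sum_def using nonneg by (rule sum_nonneg)
  then have "l i \<le> a + theta_sum \<theta> (\<nu> \<union> \<nu>')" if "i \<in> \<nu> \<union> \<nu>'" for i
    using that good good' sum_Un unfolding good_set_def by force
  then show ?thesis
    by (simp add: good_set_def)
qed

lemma good_set_Diff:
  assumes "finite M" "\<nu> \<subseteq> M" "good_set \<theta> a M l"
  shows "good_set \<theta> (a + theta_sum \<theta> \<nu>) (M - \<nu>) l"
proof -
  have "theta_sum \<theta> M = theta_sum \<theta> \<nu> + theta_sum \<theta> (M - \<nu>)"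
    using assms theta_sum_Un_disjoint[of \<nu> "M - \<nu>" \<theta>] finite_subset by (auto simp: Un_absorb1)
  then show ?thesis
    using assms(3) unfolding good_set_def by (simp add: add.assoc)
qed

lemma max_good_subset_eq_iff:
  assumes fin: "finite B" and nonneg: "\<And>i. i \<in> B \<Longrightarrow> 0 \<le> \<theta> i" and sub: "\<nu> \<subseteq> B"
  shows "max_good_subset \<theta> B a l = \<nu> \<longleftrightarrow>
    good_set \<theta> a \<nu> l \<and> no_good_subset \<theta> (B - \<nu>) (a + theta_sum \<theta> \<nu>) l"
proof
  assume max: "max_good_subset \<theta> B a l = \<nu>"
  have "good_set \<theta> a (max_good_subset \<theta> B a l) l"
    using fin nonneg by (rule good_set_max_good_subset)
  then have good: "good_set \<theta> a \<nu> l"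
    using max by simp
  have "\<not> good_set \<theta> (a + theta_sum \<theta> \<nu>) \<nu>' l" if "\<nu>' \<subseteq> B - \<nu>" "\<nu>' \<noteq> {}" for \<nu>'
  proof
    assume "good_set \<theta> (a + theta_sum \<theta> \<nu>) \<nu>' l"
    then have "good_set \<theta> a (\<nu> \<union> \<nu>') l"
      using finite_subset[OF sub fin] finite_subset[of \<nu>' B] fin that nonneg good
      by (intro good_set_Un) auto
    then have "\<nu> \<union> \<nu>' \<subseteq> max_good_subset \<theta> B a l"
      using sub that by (intro subset_max_good_subset) auto
    then show False
      using max that by auto
  qed
  with good show "good_set \<theta> a \<nu> l \<and> no_good_subset \<theta> (B - \<nu>) (a + theta_sum \<theta> \<nu>) l"
    unfolding no_good_subset_def by blast
next
  assume H: "good_set \<theta> a \<nu> l \<and> no_good_subset \<theta> (B - \<nu>) (a + theta_sum \<theta> \<nu>) l"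
  let ?M = "max_good_subset \<theta> B a l"
  have sub_M: "\<nu> \<subseteq> ?M"
    using H sub by (intro subset_max_good_subset) auto
  have "good_set \<theta> a ?M l"
    using fin nonneg by (rule good_set_max_good_subset)
  then have "good_set \<theta> (a + theta_sum \<theta> \<nu>) (?M - \<nu>) l"
    using finite_subset[OF max_good_subset_subset fin] sub_M by (intro good_set_Diff)
  moreover have "?M - \<nu> \<subseteq> B - \<nu>"
    using max_good_subset_subset[of \<theta> B a l] by auto
  ultimately have "?M - \<nu> = {}"
    using H unfolding no_good_subset_def by auto
  then show "?M = \<nu>"
    using sub_M by auto
qed

lemma sum_prod_expectation_max_good_subset:
  assumes "finite B" "\<And>i. i \<in> B \<Longrightarrow> finite (V i)" "\<And>i. i \<in> B \<Longrightarrow> (\<Sum>v\<in>V i. w i v) = 1"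
  shows "(\<Sum>\<nu>\<in>Pow B. prod_expectation B V w (\<lambda>l. of_bool (max_good_subset \<theta> B a l = \<nu>))) = 1"
proof -
  have "Pow B \<inter> {\<nu>. max_good_subset \<theta> B a l = \<nu>} = {max_good_subset \<theta> B a l}" for l
    using max_good_subset_subset[of \<theta> B a l] by auto
  then have "(\<Sum>\<nu>\<in>Pow B. of_bool (max_good_subset \<theta> B a l = \<nu>)) = (1::real)" for l
    using assms(1) by simp
  then have "(\<Sum>\<nu>\<in>Pow B. prod_expectation B V w (\<lambda>l. of_bool (max_good_subset \<theta> B a l = \<nu>)))
      = prod_expectation B V w (\<lambda>l. 1)"
    by (simp add: prod_expectation_sum)
  also have "\<dots> = 1"
    using assms by (rule prod_expectation_one)
  finally show ?thesis .
qed

context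
  fixes U :: "nat set" and \<theta> :: "nat \<Rightarrow> real" and V :: "nat \<Rightarrow> real set"
    and w :: "nat \<Rightarrow> real \<Rightarrow> real" and c :: "nat \<Rightarrow> real"
  assumes finite_U: "finite U" and theta_nonneg: "\<And>i. i \<in> U \<Longrightarrow> 0 \<le> \<theta> i"
    and finite_V: "\<And>i. i \<in> U \<Longrightarrow> finite (V i)"
    and weights_sum: "\<And>i. i \<in> U \<Longrightarrow> (\<Sum>v\<in>V i. w i v) = 1"
    and weights_cdf: "\<And>i \<mu>. i \<in> \<mu> \<Longrightarrow> \<mu> \<subseteq> U \<Longrightarrow>
      (\<Sum>v\<in>{v\<in>V i. v \<le> theta_sum \<theta> \<mu>}. w i v) = c i * theta_sum \<theta> \<mu>"
begin

lemma prod_expectation_max_good_subset: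
  assumes "B \<inter> \<kappa> = {}" "B \<union> \<kappa> \<subseteq> U" "\<nu> \<subseteq> B"
  shows "prod_expectation B V w (\<lambda>l. of_bool (max_good_subset \<theta> B (theta_sum \<theta> \<kappa>) l = \<nu>))
    = theta_sum \<theta> (\<kappa> \<union> \<nu>) ^ card \<nu> * (\<Prod>i\<in>\<nu>. c i)
      * prod_expectation (B - \<nu>) V w
          (\<lambda>l. of_bool (no_good_subset \<theta> (B - \<nu>) (theta_sum \<theta> (\<kappa> \<union> \<nu>)) l))"
proof -
  let ?t = "theta_sum \<theta> (\<kappa> \<union> \<nu>)"
  have fin: "finite B" "finite \<kappa>" "finite \<nu>"
    using assms finite_subset[OF _ finite_U] finite_subset[of \<nu> B] by auto
  have t: "theta_sum \<theta> \<kappa> + theta_sum \<theta> \<nu> = ?t"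
    using fin assms by (intro theta_sum_Un_disjoint[symmetric]) auto
  have nonneg_B: "\<And>i. i \<in> B \<Longrightarrow> 0 \<le> \<theta> i"
    using theta_nonneg assms by auto
  have "max_good_subset \<theta> B (theta_sum \<theta> \<kappa>) l = \<nu>
      \<longleftrightarrow> good_set \<theta> (theta_sum \<theta> \<kappa>) \<nu> l \<and> no_good_subset \<theta> (B - \<nu>) ?t l" for l
    using max_good_subset_eq_iff[OF fin(1) nonneg_B assms(3), where a="theta_sum \<theta> \<kappa>" and l=l] t
    by simp
  then have "of_bool (max_good_subset \<theta> B (theta_sum \<theta> \<kappa>) l = \<nu>)
      = (\<Prod>i\<in>\<nu>. of_bool (l i \<le> ?t)) * (of_bool (no_good_subset \<theta> (B - \<nu>) ?t l) :: real)" for l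
    by (simp only: of_bool_conj of_bool_good_set[OF fin(3)] t)
  then have "prod_expectation B V w (\<lambda>l. of_bool (max_good_subset \<theta> B (theta_sum \<theta> \<kappa>) l = \<nu>))
      = prod_expectation \<nu> V w (\<lambda>l. \<Prod>i\<in>\<nu>. of_bool (l i \<le> ?t))
        * prod_expectation (B - \<nu>) V w (\<lambda>l. of_bool (no_good_subset \<theta> (B - \<nu>) ?t l))"
    using assms fin finite_V
    by (simp only:) (intro prod_expectation_mult prod.cong arg_cong[where f=of_bool]
          no_good_subset_cong; auto)
  also have "prod_expectation \<nu> V w (\<lambda>l. \<Prod>i\<in>\<nu>. of_bool (l i \<le> ?t)) = ?t ^ card \<nu> * (\<Prod>i\<in>\<nu>. c i)"
    using assms fin finite_V by (intro prod_expectation_all_le weights_cdf) auto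
  finally show ?thesis .
qed

text \<open>The offset is kept of the form \<open>\<theta>\<^sub>\<kappa>\<close>, so that every threshold met in the recursion over the
  largest good subset is again some \<open>\<theta>\<^sub>\<mu>\<close> with \<open>\<mu> \<subseteq> U\<close>, where the distribution functions are known.\<close>

lemma prod_expectation_no_good_subset:
  assumes "B \<inter> \<kappa> = {}" "B \<union> \<kappa> \<subseteq> U"
  shows "prod_expectation B V w (\<lambda>l. of_bool (no_good_subset \<theta> B (theta_sum \<theta> \<kappa>) l))
    = no_good_poly \<theta> c B (theta_sum \<theta> \<kappa>) 1"
proof -
  have "finite B"
    using assms finite_U finite_subset by auto
  then show ?thesis
    using assms
  proof (induction B arbitrary: \<kappa> rule: finite_psubset_induct)
    case (psubset B)
    let ?a = "theta_sum \<theta> \<kappa>"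
    let ?E = "\<lambda>\<nu>. prod_expectation B V w (\<lambda>l. of_bool (max_good_subset \<theta> B ?a l = \<nu>))"
    let ?P = "\<lambda>\<nu>. (?a + theta_sum \<theta> \<nu>) ^ card \<nu> * (\<Prod>i\<in>\<nu>. c i)
      * no_good_poly \<theta> c (B - \<nu>) (?a + theta_sum \<theta> \<nu>) 1"
    have fin: "finite \<kappa>" "\<And>\<nu>. \<nu> \<subseteq> B \<Longrightarrow> finite \<nu>"
      using psubset finite_subset[OF _ finite_U] finite_subset[of _ B] by auto
    have sum_E: "(\<Sum>\<nu>\<in>Pow B. ?E \<nu>) = 1"
      using psubset finite_V weights_sum by (intro sum_prod_expectation_max_good_subset) auto
    have sum_P: "(\<Sum>\<nu>\<in>Pow B. ?P \<nu>) = 1"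
      using abel_sum_eq_power[OF psubset.hyps(1), of \<theta> c ?a 1] by (simp add: abel_sum_def)
    have E_eq_P: "?E \<nu> = ?P \<nu>" if "\<nu> \<in> Pow B - {{}}" for \<nu>
    proof -
      have t: "?a + theta_sum \<theta> \<nu> = theta_sum \<theta> (\<kappa> \<union> \<nu>)"
        using that fin psubset by (intro theta_sum_Un_disjoint[symmetric]) auto
      have "B - \<nu> \<subset> B" "(B - \<nu>) \<inter> (\<kappa> \<union> \<nu>) = {}" "B - \<nu> \<union> (\<kappa> \<union> \<nu>) \<subseteq> U"
        using that psubset.prems by auto
      then have "prod_expectation (B - \<nu>) V w
          (\<lambda>l. of_bool (no_good_subset \<theta> (B - \<nu>) (theta_sum \<theta> (\<kappa> \<union> \<nu>)) l))
          = no_good_poly \<theta> c (B - \<nu>) (theta_sum \<theta> (\<kappa> \<union> \<nu>)) 1"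
        by (rule psubset.IH)
      then show ?thesis
        using that psubset.prems by (simp add: prod_expectation_max_good_subset t)
    qed
    have remove_empty: "sum f (Pow B) = f {} + sum f (Pow B - {{}})" for f :: "nat set \<Rightarrow> real"
      using psubset.hyps by (intro sum.remove) auto
    have "(\<Sum>\<nu>\<in>Pow B - {{}}. ?E \<nu>) = (\<Sum>\<nu>\<in>Pow B - {{}}. ?P \<nu>)"
      using E_eq_P by (rule sum.cong[OF refl])
    then have "?E {} = ?P {}"
      using remove_empty[of ?E] remove_empty[of ?P] sum_E sum_P by linarith
    then show ?case
      using psubset.prems by (simp add: prod_expectation_max_good_subset)
  qed
qed

lemma prod_expectation_some_good_subset:
  "prod_expectation U V w (\<lambda>l. of_bool (\<not> no_good_subset \<theta> U 0 l)) = (\<Sum>i\<in>U. \<theta> i * c i)"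
proof -
  have "prod_expectation U V w (\<lambda>l. of_bool (no_good_subset \<theta> U (theta_sum \<theta> {}) l))
      = no_good_poly \<theta> c U (theta_sum \<theta> {}) 1"
    by (rule prod_expectation_no_good_subset) auto
  moreover have "prod_expectation U V w (\<lambda>l. 1) = 1"
    using finite_U finite_V weights_sum by (rule prod_expectation_one)
  ultimately show ?thesis
    using prod_expectation_diff[of U V w "\<lambda>_. 1" "\<lambda>l. of_bool (no_good_subset \<theta> U 0 l)"]
    by (simp add: no_good_poly_def of_bool_not_iff)
qed

end

section \<open>Comparison of discrete distributions\<close>

lemma sum_mult_antimono_le_of_cdf_le:
  fixes w w' h :: "real \<Rightarrow> real"
  assumes "finite V"
    and "\<And>t. t \<in> V \<Longrightarrow> (\<Sum>v\<in>{v\<in>V. v \<le> t}. w' v) \<le> (\<Sum>v\<in>{v\<in>V. v \<le> t}. w v)"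
    and "\<And>u v. u \<in> V \<Longrightarrow> v \<in> V \<Longrightarrow> u \<le> v \<Longrightarrow> h v \<le> h u"
    and "\<And>v. v \<in> V \<Longrightarrow> 0 \<le> h v"
  shows "(\<Sum>v\<in>V. w' v * h v) \<le> (\<Sum>v\<in>V. w v * h v)"
  using assms
proof (induction V arbitrary: h rule: finite_linorder_max_induct)
  case empty
  then show ?case by simp
next
  case (insert b A)
  let ?g = "\<lambda>v. h v - h b"
  have b: "b \<notin> A"
    using insert.hyps by auto
  have split: "(\<Sum>v\<in>insert b A. u v * h v) = (\<Sum>v\<in>A. u v * ?g v) + h b * (\<Sum>v\<in>insert b A. u v)"
    for u :: "real \<Rightarrow> real"
    using insert.hyps b by (simp add: algebra_simps sum_distrib_left sum_subtractf)
  have "(\<Sum>v\<in>A. w' v * ?g v) \<le> (\<Sum>v\<in>A. w v * ?g v)"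
  proof (rule insert.IH)
    fix t assume "t \<in> A"
    then have "{v \<in> insert b A. v \<le> t} = {v \<in> A. v \<le> t}"
      using insert.hyps by auto
    then show "(\<Sum>v\<in>{v\<in>A. v \<le> t}. w' v) \<le> (\<Sum>v\<in>{v\<in>A. v \<le> t}. w v)"
      using insert.prems(1) \<open>t \<in> A\<close> by force
  next
    show "?g v \<le> ?g u" if "u \<in> A" "v \<in> A" "u \<le> v" for u v
      using that insert.prems(2) by auto
    show "0 \<le> ?g v" if "v \<in> A" for v
      using that insert.hyps insert.prems(2)[of v b] by auto
  qed
  moreover have "(\<Sum>v\<in>insert b A. w' v) \<le> (\<Sum>v\<in>insert b A. w v)"
  proof -
    have "{v \<in> insert b A. v \<le> b} = insert b A"
      using insert.hyps by auto
    then show ?thesis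
      using insert.prems(1)[of b] by simp
  qed
  moreover have "0 \<le> h b"
    using insert.prems(3) by simp
  ultimately show ?case
    unfolding split by (simp add: add_mono mult_left_mono)
qed

lemma prod_expectation_nonneg:
  "(\<And>i v. i \<in> A \<Longrightarrow> v \<in> V i \<Longrightarrow> 0 \<le> w i v) \<Longrightarrow> (\<And>l. 0 \<le> g l) \<Longrightarrow> 0 \<le> prod_expectation A V w g"
  unfolding prod_expectation_def
  by (intro sum_nonneg mult_nonneg_nonneg prod_nonneg) (auto simp: PiE_iff)

lemma prod_expectation_antimono_le:
  assumes "finite A"
    and "\<And>i. i \<in> A \<Longrightarrow> finite (V i)"
    and "\<And>i v. i \<in> A \<Longrightarrow> v \<in> V i \<Longrightarrow> 0 \<le> w i v"
    and "\<And>i v. i \<in> A \<Longrightarrow> v \<in> V i \<Longrightarrow> 0 \<le> w' i v"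
    and "\<And>i t. i \<in> A \<Longrightarrow> t \<in> V i \<Longrightarrow>
      (\<Sum>v\<in>{v\<in>V i. v \<le> t}. w' i v) \<le> (\<Sum>v\<in>{v\<in>V i. v \<le> t}. w i v)"
    and "\<And>l l'. (\<And>i. i \<in> A \<Longrightarrow> l i \<le> l' i) \<Longrightarrow> g l' \<le> g l"
    and "\<And>l. 0 \<le> g l"
  shows "prod_expectation A V w' g \<le> prod_expectation A V w g"
  using assms
proof (induction A arbitrary: g rule: finite_induct)
  case empty
  then show ?case by (simp add: prod_expectation_def)
next
  case (insert j A)
  let ?h = "\<lambda>w v. prod_expectation A V w (\<lambda>l. g (l(j := v)))"
  have "prod_expectation (insert j A) V w' g = (\<Sum>v\<in>V j. w' j v * ?h w' v)"
    using insert.hyps by (rule prod_expectation_insert)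
  also have "\<dots> \<le> (\<Sum>v\<in>V j. w j v * ?h w' v)"
  proof (rule sum_mult_antimono_le_of_cdf_le)
    show "?h w' v \<le> ?h w' u" if "u \<le> v" for u v
      unfolding prod_expectation_def
    proof (rule sum_mono)
      fix l assume "l \<in> PiE A V"
      then have "0 \<le> (\<Prod>i\<in>A. w' i (l i))"
        using insert.prems(3) by (intro prod_nonneg) (auto simp: PiE_iff)
      moreover have "g (l(j := v)) \<le> g (l(j := u))"
        using that by (intro insert.prems(5)) auto
      ultimately show "(\<Prod>i\<in>A. w' i (l i)) * g (l(j := v)) \<le> (\<Prod>i\<in>A. w' i (l i)) * g (l(j := u))"
        by (simp add: mult_left_mono)
    qed
    show "0 \<le> ?h w' v" for v
      using insert.prems by (intro prod_expectation_nonneg) auto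
  qed (use insert.prems in auto)
  also have "\<dots> \<le> (\<Sum>v\<in>V j. w j v * ?h w v)"
  proof (rule sum_mono)
    fix v assume v: "v \<in> V j"
    have "?h w' v \<le> ?h w v"
    proof (rule insert.IH)
      show "g (l'(j := v)) \<le> g (l(j := v))" if "\<And>i. i \<in> A \<Longrightarrow> l i \<le> l' i" for l l'
        using that by (intro insert.prems(5)) auto
    qed (use insert.prems in auto)
    then show "w j v * ?h w' v \<le> w j v * ?h w v"
      using insert.prems(2) v by (intro mult_left_mono) auto
  qed
  also have "\<dots> = prod_expectation (insert j A) V w g"
    using insert.hyps by (rule prod_expectation_insert[symmetric])
  finally show ?case .
qed

definition lower_neighbour :: "real set \<Rightarrow> real \<Rightarrow> real" where
  "lower_neighbour T v = Max (insert 0 {s\<in>T. s < v})"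

lemma lower_neighbour_le: "finite T \<Longrightarrow> 0 \<le> v \<Longrightarrow> lower_neighbour T v \<le> v"
  unfolding lower_neighbour_def by (intro Max.boundedI) auto

lemma sum_gaps_lower_neighbour:
  assumes "finite T" "\<And>s. s \<in> T \<Longrightarrow> 0 < s"
  shows "(\<Sum>v\<in>T. v - lower_neighbour T v) = Max (insert 0 T)"
  using assms
proof (induction T rule: finite_linorder_max_induct)
  case empty
  then show ?case by simp
next
  case (insert b A)
  have "{s \<in> insert b A. s < v} = {s \<in> A. s < v}" if "v \<in> A" for v
    using insert.hyps that by auto
  then have "(\<Sum>v\<in>A. v - lower_neighbour (insert b A) v) = (\<Sum>v\<in>A. v - lower_neighbour A v)"
    unfolding lower_neighbour_def by (intro sum.cong) auto
  moreover have "{s \<in> insert b A. s < b} = A"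
    using insert.hyps by auto
  moreover have "b \<notin> A"
    using insert.hyps by auto
  moreover have "Max (insert 0 (insert b A)) = b"
    using insert.hyps insert.prems by (intro Max_eqI) (auto intro: less_imp_le)
  ultimately show ?case
    using insert by (simp add: lower_neighbour_def)
qed

lemma sum_gaps_lower_neighbour_upto:
  assumes "finite T" "\<And>s. s \<in> T \<Longrightarrow> 0 < s" "t \<in> T"
  shows "(\<Sum>v\<in>{v\<in>T. v \<le> t}. v - lower_neighbour T v) = t"
proof -
  let ?T = "{v\<in>T. v \<le> t}"
  have "{s \<in> T. s < v} = {s \<in> ?T. s < v}" if "v \<in> ?T" for v
    using that by auto
  then have "(\<Sum>v\<in>?T. v - lower_neighbour T v) = (\<Sum>v\<in>?T. v - lower_neighbour ?T v)"
    unfolding lower_neighbour_def by (intro sum.cong) auto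
  also have "\<dots> = Max (insert 0 ?T)"
    using assms by (intro sum_gaps_lower_neighbour) auto
  also have "\<dots> = t"
    using assms by (intro Max_eqI) (auto intro: less_imp_le)
  finally show ?thesis .
qed

text \<open>Weights on \<open>T \<union> {2}\<close> whose distribution function is \<open>t \<mapsto> c * t\<close> on \<open>T \<subseteq> (0, 1]\<close>;
  the point \<open>2\<close> lies above every threshold and carries the remaining mass.\<close>

definition linear_cdf_weights :: "real set \<Rightarrow> real \<Rightarrow> real \<Rightarrow> real" where
  "linear_cdf_weights T c v =
    (if v = 2 then 1 - c * Max (insert 0 T) else c * (v - lower_neighbour T v))"

context
  fixes T :: "real set" and c :: real
  assumes finite_T: "finite T" and T_bounds: "\<And>t. t \<in> T \<Longrightarrow> 0 < t \<and> t \<le> 1"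
    and c_bounds: "0 \<le> c" "c \<le> 1"
begin

lemma linear_cdf_weights_cdf:
  assumes "t \<in> T"
  shows "(\<Sum>v\<in>{v\<in>insert 2 T. v \<le> t}. linear_cdf_weights T c v) = c * t"
proof -
  have "{v\<in>insert 2 T. v \<le> t} = {v\<in>T. v \<le> t}"
    using T_bounds[OF assms] by auto
  moreover have "linear_cdf_weights T c v = c * (v - lower_neighbour T v)" if "v \<in> T" for v
    using T_bounds[OF that] by (simp add: linear_cdf_weights_def)
  ultimately show ?thesis
    using finite_T T_bounds assms
    by (simp add: sum_distrib_left[symmetric] sum_gaps_lower_neighbour_upto)
qed

lemma linear_cdf_weights_sum: "(\<Sum>v\<in>insert 2 T. linear_cdf_weights T c v) = 1"
proof -
  have "2 \<notin> T"
    using T_bounds by force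
  moreover have "linear_cdf_weights T c v = c * (v - lower_neighbour T v)" if "v \<in> T" for v
    using T_bounds[OF that] by (simp add: linear_cdf_weights_def)
  ultimately show ?thesis
    using finite_T T_bounds
    by (simp add: sum_distrib_left[symmetric] sum_gaps_lower_neighbour linear_cdf_weights_def)
qed

lemma linear_cdf_weights_nonneg:
  assumes "v \<in> insert 2 T"
  shows "0 \<le> linear_cdf_weights T c v"
proof (cases "v = 2")
  case True
  have "Max (insert 0 T) \<le> 1"
    using finite_T T_bounds by (intro Max.boundedI) auto
  moreover have "0 \<le> Max (insert 0 T)"
    using finite_T by (simp add: Max_ge_iff)
  ultimately have "c * Max (insert 0 T) \<le> 1"
    using c_bounds by (simp add: mult_le_one)
  then show ?thesis
    using True by (simp add: linear_cdf_weights_def)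
next
  case False
  then have "v \<in> T"
    using assms by simp
  then have "lower_neighbour T v \<le> v"
    using finite_T T_bounds by (intro lower_neighbour_le) (auto intro: less_imp_le)
  then show ?thesis
    using False c_bounds by (simp add: linear_cdf_weights_def)
qed

end

definition thresholds :: "nat set \<Rightarrow> (nat \<Rightarrow> real) \<Rightarrow> nat \<Rightarrow> real set" where
  "thresholds U \<theta> i = theta_sum \<theta> ` {\<mu>. i \<in> \<mu> \<and> \<mu> \<subseteq> U}"

context
  fixes U :: "nat set" and \<theta> :: "nat \<Rightarrow> real"
  assumes finite_U: "finite U" and theta_pos: "\<And>i. i \<in> U \<Longrightarrow> 0 < \<theta> i"
    and theta_total: "theta_sum \<theta> U = 1"
begin

lemma finite_thresholds: "finite (thresholds U \<theta> i)"
  unfolding thresholds_def using finite_U by simp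

lemma thresholds_bounds:
  assumes "t \<in> thresholds U \<theta> i"
  shows "0 < t \<and> t \<le> 1"
proof -
  obtain \<mu> where \<mu>: "i \<in> \<mu>" "\<mu> \<subseteq> U" "t = theta_sum \<theta> \<mu>"
    using assms unfolding thresholds_def by auto
  have "finite \<mu>"
    using \<mu> finite_U finite_subset by auto
  then have "0 < t"
    unfolding \<mu> theta_sum_def using \<mu> theta_pos
    by (intro sum_pos2[of _ i]) (auto intro: less_imp_le)
  moreover have "t \<le> 1"
    unfolding \<mu> theta_total[symmetric] using \<mu> finite_U theta_pos
    by (intro theta_sum_mono) (auto intro: less_imp_le)
  ultimately show ?thesis ..
qed

lemma weighted_sum_le_prod_expectation_some_good_subset:
  fixes w :: "nat \<Rightarrow> real \<Rightarrow> real" and c :: "nat \<Rightarrow> real"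
  defines "V \<equiv> \<lambda>i. insert 2 (thresholds U \<theta> i)"
  assumes c_bounds: "\<And>i. i \<in> U \<Longrightarrow> 0 \<le> c i \<and> c i \<le> 1"
    and w_nonneg: "\<And>i v. i \<in> U \<Longrightarrow> v \<in> V i \<Longrightarrow> 0 \<le> w i v"
    and w_sum: "\<And>i. i \<in> U \<Longrightarrow> (\<Sum>v\<in>V i. w i v) = 1"
    and w_cdf: "\<And>i t. i \<in> U \<Longrightarrow> t \<in> thresholds U \<theta> i \<Longrightarrow> c i * t \<le> (\<Sum>v\<in>{v\<in>V i. v \<le> t}. w i v)"
  shows "(\<Sum>i\<in>U. \<theta> i * c i) \<le> prod_expectation U V w (\<lambda>l. of_bool (\<not> no_good_subset \<theta> U 0 l))"
proof -
  define w' where "w' i = linear_cdf_weights (thresholds U \<theta> i) (c i)" for i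
  have w'_nonneg: "0 \<le> w' i v" if "i \<in> U" "v \<in> V i" for i v
    unfolding w'_def using that c_bounds[OF that(1)]
    by (intro linear_cdf_weights_nonneg finite_thresholds thresholds_bounds) (auto simp: V_def)
  have w'_sum: "(\<Sum>v\<in>V i. w' i v) = 1" if "i \<in> U" for i
    unfolding w'_def V_def using c_bounds[OF that]
    by (intro linear_cdf_weights_sum finite_thresholds thresholds_bounds) auto
  have w'_cdf: "(\<Sum>v\<in>{v\<in>V i. v \<le> t}. w' i v) = c i * t" if "i \<in> U" "t \<in> thresholds U \<theta> i" for i t
    unfolding w'_def V_def using that c_bounds[OF that(1)]
    by (intro linear_cdf_weights_cdf finite_thresholds thresholds_bounds) auto
  have finite_V: "\<And>i. finite (V i)"
    unfolding V_def using finite_thresholds by simp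
  have "(\<Sum>i\<in>U. \<theta> i * c i) = prod_expectation U V w' (\<lambda>l. of_bool (\<not> no_good_subset \<theta> U 0 l))"
  proof (rule prod_expectation_some_good_subset[symmetric, OF finite_U _ finite_V w'_sum])
    show "0 \<le> \<theta> i" if "i \<in> U" for i
      using theta_pos[OF that] by simp
    show "(\<Sum>v\<in>{v\<in>V i. v \<le> theta_sum \<theta> \<mu>}. w' i v) = c i * theta_sum \<theta> \<mu>"
      if "i \<in> \<mu>" "\<mu> \<subseteq> U" for i \<mu>
      using that by (intro w'_cdf) (auto simp: thresholds_def)
  qed
  also have "\<dots> \<le> prod_expectation U V w (\<lambda>l. of_bool (\<not> no_good_subset \<theta> U 0 l))"
  proof (rule prod_expectation_antimono_le[OF finite_U finite_V w_nonneg w'_nonneg])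
    show "(\<Sum>v\<in>{v\<in>V i. v \<le> t}. w' i v) \<le> (\<Sum>v\<in>{v\<in>V i. v \<le> t}. w i v)"
      if "i \<in> U" "t \<in> V i" for i t
    proof (cases "t = 2")
      case True
      then have "{v\<in>V i. v \<le> t} = V i"
        using thresholds_bounds by (force simp: V_def)
      then show ?thesis
        using that w_sum w'_sum by simp
    next
      case False
      then show ?thesis
        using that w'_cdf w_cdf by (simp add: V_def)
    qed
    show "of_bool (\<not> no_good_subset \<theta> U 0 l') \<le> (of_bool (\<not> no_good_subset \<theta> U 0 l) :: real)"
      if "\<And>i. i \<in> U \<Longrightarrow> l i \<le> l' i" for l l'
      using no_good_subset_mono[of \<theta> U 0 l l'] that by auto
  qed auto
  finally show ?thesis .
qed

end

section \<open>Levels of random variables\<close>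

definition level :: "real set \<Rightarrow> real \<Rightarrow> real \<Rightarrow> real" where
  "level T x y = Min ((\<lambda>t. if x / t < y then t else 2) ` insert 2 T)"

context
  fixes T :: "real set" and x :: real
  assumes finite_T: "finite T" and T_bounds: "\<And>t. t \<in> T \<Longrightarrow> 0 < t \<and> t \<le> 1"
    and x_nonneg: "0 \<le> x"
begin

lemma level_in: "level T x y \<in> insert 2 T"
proof -
  have "level T x y \<in> (\<lambda>t. if x / t < y then t else 2) ` insert 2 T"
    unfolding level_def using finite_T by (intro Min_in) auto
  then show ?thesis
    by auto
qed

lemma level_le_iff:
  assumes t: "t \<in> T"
  shows "level T x y \<le> t \<longleftrightarrow> x / t < y"
proof
  assume le: "level T x y \<le> t"
  have "level T x y \<in> (\<lambda>t. if x / t < y then t else 2) ` insert 2 T"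
    unfolding level_def using finite_T by (intro Min_in) auto
  then obtain s where s: "s \<in> insert 2 T" "level T x y = (if x / s < y then s else 2)"
    by blast
  have "t \<le> 1"
    using T_bounds[OF t] by simp
  then have "x / s < y" "level T x y = s"
    using le s by (auto split: if_splits)
  moreover have "0 < s"
    using s le \<open>t \<le> 1\<close> calculation(2) T_bounds by force
  ultimately have "x / t \<le> x / s" "x / s < y"
    using le x_nonneg by (auto intro: divide_left_mono)
  then show "x / t < y"
    by linarith
next
  assume "x / t < y"
  then have "(if x / t < y then t else 2) = t"
    by simp
  moreover have "level T x y \<le> (if x / t < y then t else 2)"
    unfolding level_def using finite_T t by (intro Min_le) auto
  ultimately show "level T x y \<le> t"
    by simp
qed

end

lemma level_measurable: "finite T \<Longrightarrow> level T x \<in> borel_measurable borel"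
  unfolding level_def[abs_def] by (intro borel_measurable_Min) auto

lemma less_sum_of_good_set:
  fixes y :: "nat \<Rightarrow> real"
  assumes "finite U" "\<nu> \<subseteq> U" "\<nu> \<noteq> {}" "\<And>i. i \<in> U \<Longrightarrow> 0 < \<theta> i" "\<And>i. i \<in> U \<Longrightarrow> 0 \<le> y i"
    and big: "\<And>i. i \<in> \<nu> \<Longrightarrow> x / theta_sum \<theta> \<nu> < y i"
  shows "x < (\<Sum>i\<in>U. \<theta> i * y i)"
proof -
  have fin: "finite \<nu>"
    using finite_subset[OF assms(2,1)] .
  have pos: "0 < theta_sum \<theta> \<nu>"
    unfolding theta_sum_def using fin assms by (intro sum_pos) auto
  have "x = (\<Sum>i\<in>\<nu>. \<theta> i * (x / theta_sum \<theta> \<nu>))"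
    using pos unfolding theta_sum_def
    by (simp add: sum_divide_distrib[symmetric] sum_distrib_right[symmetric])
  also have "\<dots> < (\<Sum>i\<in>\<nu>. \<theta> i * y i)"
    using fin assms by (intro sum_strict_mono mult_strict_left_mono big) auto
  also have "\<dots> \<le> (\<Sum>i\<in>U. \<theta> i * y i)"
  proof (rule sum_mono2)
    show "0 \<le> \<theta> i * y i" if "i \<in> U - \<nu>" for i
      using that assms(4,5)[of i] by simp
  qed (use assms in auto)
  finally show ?thesis .
qed

context prob_space
begin

lemma sum_prob_eq:
  fixes f :: "'a \<Rightarrow> real"
  assumes "finite S" "f \<in> borel_measurable M"
  shows "(\<Sum>v\<in>S. prob {\<omega> \<in> space M. f \<omega> = v}) = prob {\<omega> \<in> space M. f \<omega> \<in> S}"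
proof -
  have "f -` {v} \<inter> space M \<in> events" for v
    using assms(2) by (rule measurable_sets) (intro borel_closed closed_singleton)
  then have "{\<omega> \<in> space M. f \<omega> = v} \<in> events" for v
    by (simp add: vimage_def Int_def conj_commute)
  then have "prob (\<Union>v\<in>S. {\<omega> \<in> space M. f \<omega> = v}) = (\<Sum>v\<in>S. prob {\<omega> \<in> space M. f \<omega> = v})"
    using assms(1) by (intro measure_finite_Union) (auto simp: disjoint_family_on_def)
  moreover have "(\<Union>v\<in>S. {\<omega> \<in> space M. f \<omega> = v}) = {\<omega> \<in> space M. f \<omega> \<in> S}"
    by auto
  ultimately show ?thesis
    by simp
qed

lemma prob_indep_vars_finite_range:
  fixes L :: "nat \<Rightarrow> 'a \<Rightarrow> real"
  assumes indep: "indep_vars (\<lambda>_. borel) L U" and U: "finite U" "U \<noteq> {}"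
    and range: "\<And>i \<omega>. i \<in> U \<Longrightarrow> \<omega> \<in> space M \<Longrightarrow> L i \<omega> \<in> V i"
    and finite_V: "\<And>i. i \<in> U \<Longrightarrow> finite (V i)"
  shows "prob {\<omega> \<in> space M. P (\<lambda>i\<in>U. L i \<omega>)}
    = prod_expectation U V (\<lambda>i v. prob {\<omega> \<in> space M. L i \<omega> = v}) (\<lambda>l. of_bool (P l))"
proof -
  define atom where "atom l = {\<omega> \<in> space M. (\<lambda>i\<in>U. L i \<omega>) = l}" for l
  let ?S = "{l \<in> PiE U V. P l}"
  have finite_PiE: "finite (PiE U V)"
    using U finite_V by (intro finite_PiE)
  have L_meas: "\<And>i. i \<in> U \<Longrightarrow> L i \<in> borel_measurable M"
    using indep unfolding indep_vars_def by auto
  have atom_eq: "atom l = (\<Inter>i\<in>U. L i -` {l i} \<inter> space M)" if "l \<in> PiE U V" for l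
    using that U(2) by (auto simp: atom_def PiE_iff extensional_def restrict_def fun_eq_iff)
  have atom_prob: "prob (atom l) = (\<Prod>i\<in>U. prob {\<omega> \<in> space M. L i \<omega> = l i})" if "l \<in> PiE U V" for l
    unfolding atom_eq[OF that] using indep U
    by (subst indep_varsD_finite) (auto intro!: prod.cong arg_cong[where f=prob])
  have "{\<omega> \<in> space M. P (\<lambda>i\<in>U. L i \<omega>)} = (\<Union>l\<in>?S. atom l)"
    using range by (auto simp: atom_def)
  then have "prob {\<omega> \<in> space M. P (\<lambda>i\<in>U. L i \<omega>)} = (\<Sum>l\<in>?S. prob (atom l))"
  proof (simp only:, intro measure_finite_Union)
    show "finite ?S"
      using finite_PiE by (rule rev_finite_subset) auto
    show "atom ` ?S \<subseteq> sets M"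
    proof clarify
      fix l assume "l \<in> PiE U V" "P l"
      show "atom l \<in> sets M"
        unfolding atom_eq[OF \<open>l \<in> PiE U V\<close>] using L_meas U
        by (intro sets.finite_INT measurable_sets[where A=borel]) auto
    qed
    show "disjoint_family_on atom ?S"
      unfolding disjoint_family_on_def atom_def by auto
  qed auto
  also have "\<dots> = (\<Sum>l\<in>?S. \<Prod>i\<in>U. prob {\<omega> \<in> space M. L i \<omega> = l i})"
    by (rule sum.cong) (auto simp: atom_prob)
  also have "\<dots> = (\<Sum>l\<in>PiE U V. (\<Prod>i\<in>U. prob {\<omega> \<in> space M. L i \<omega> = l i}) * of_bool (P l))"
    using finite_PiE by (simp add: Int_def)
  finally show ?thesis
    unfolding prod_expectation_def .
qed

lemma prob_nonneg_weighted_sum_gt_neg: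
  fixes X :: "nat \<Rightarrow> 'a \<Rightarrow> real"
  assumes "finite U" "\<And>i. i \<in> U \<Longrightarrow> X i \<in> borel_measurable M"
    and "\<And>i. i \<in> U \<Longrightarrow> AE \<omega> in M. 0 \<le> X i \<omega>" "\<And>i. i \<in> U \<Longrightarrow> 0 \<le> \<theta> i" "x < 0"
  shows "prob {\<omega> \<in> space M. (\<Sum>i\<in>U. \<theta> i * X i \<omega>) > x} = 1"
proof (subst prob_Collect_eq_1)
  show "{\<omega> \<in> space M. (\<Sum>i\<in>U. \<theta> i * X i \<omega>) > x} \<in> events"
    using assms(2) by measurable
  have "AE \<omega> in M. \<forall>i\<in>U. 0 \<le> X i \<omega>"
    using assms(1,3) by (simp add: AE_finite_all)
  then show "AE \<omega> in M. (\<Sum>i\<in>U. \<theta> i * X i \<omega>) > x"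
  proof eventually_elim
    case (elim \<omega>)
    then have "0 \<le> (\<Sum>i\<in>U. \<theta> i * X i \<omega>)"
      using assms(4) by (intro sum_nonneg) simp
    then show ?case
      using assms(5) by linarith
  qed
qed

lemma prob_indep_vectors_component:
  fixes X I :: "nat \<Rightarrow> 'a \<Rightarrow> real"
  assumes indep: "indep_var
      (PiM U (\<lambda>_. borel)) (\<lambda>\<omega>. \<lambda>i\<in>U. I i \<omega>) (PiM U (\<lambda>_. borel)) (\<lambda>\<omega>. \<lambda>i\<in>U. X i \<omega>)"
    and k: "k \<in> U" and sets: "A \<in> sets borel" "B \<in> sets borel"
  shows "prob {\<omega> \<in> space M. I k \<omega> \<in> A \<and> X k \<omega> \<in> B}
    = prob {\<omega> \<in> space M. I k \<omega> \<in> A} * prob {\<omega> \<in> space M. X k \<omega> \<in> B}"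
proof -
  let ?I = "\<lambda>\<omega>. \<lambda>i\<in>U. I i \<omega>" and ?X = "\<lambda>\<omega>. \<lambda>i\<in>U. X i \<omega>"
  let ?cyl = "\<lambda>S. (\<lambda>f. f k) -` S \<inter> space (PiM U (\<lambda>_. borel :: real measure))"
  have cyl: "?cyl S \<in> sets (PiM U (\<lambda>_. borel))" if "S \<in> sets borel" for S
    using k that by (intro measurable_sets[OF measurable_component_singleton]) auto
  have space: "?I \<omega> \<in> space (PiM U (\<lambda>_. borel :: real measure))"
    "?X \<omega> \<in> space (PiM U (\<lambda>_. borel :: real measure))" for \<omega>
    by (auto simp: space_PiM)
  have "prob ((\<lambda>\<omega>. (?I \<omega>, ?X \<omega>)) -` (?cyl A \<times> ?cyl B) \<inter> space M)
      = prob (?I -` ?cyl A \<inter> space M) * prob (?X -` ?cyl B \<inter> space M)"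
    using indep cyl sets by (intro indep_varD) auto
  moreover have "(\<lambda>\<omega>. (?I \<omega>, ?X \<omega>)) -` (?cyl A \<times> ?cyl B) \<inter> space M
      = {\<omega> \<in> space M. I k \<omega> \<in> A \<and> X k \<omega> \<in> B}"
    "?I -` ?cyl A \<inter> space M = {\<omega> \<in> space M. I k \<omega> \<in> A}"
    "?X -` ?cyl B \<inter> space M = {\<omega> \<in> space M. X k \<omega> \<in> B}"
    using k space by auto
  ultimately show ?thesis
    by simp
qed

lemma prob_mixture_gt_le:
  fixes X I :: "nat \<Rightarrow> 'a \<Rightarrow> real"
  assumes U: "finite U"
    and X_rv: "\<And>i. i \<in> U \<Longrightarrow> X i \<in> borel_measurable M"
    and I_rv: "\<And>i. i \<in> U \<Longrightarrow> I i \<in> borel_measurable M"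
    and I_cat: "AE \<omega> in M. \<exists>i\<in>U. I i \<omega> = 1 \<and> (\<forall>j\<in>U. j \<noteq> i \<longrightarrow> I j \<omega> = 0)"
    and I_prob: "\<And>i. i \<in> U \<Longrightarrow> prob {\<omega> \<in> space M. I i \<omega> = 1} = \<theta> i"
    and I_indep: "indep_var
      (PiM U (\<lambda>_. borel)) (\<lambda>\<omega>. \<lambda>i\<in>U. I i \<omega>) (PiM U (\<lambda>_. borel)) (\<lambda>\<omega>. \<lambda>i\<in>U. X i \<omega>)"
  shows "prob {\<omega> \<in> space M. (\<Sum>i\<in>U. I i \<omega> * X i \<omega>) > x}
    \<le> (\<Sum>i\<in>U. \<theta> i * prob {\<omega> \<in> space M. X i \<omega> > x})"
proof -
  define A where "A k = {\<omega> \<in> space M. I k \<omega> \<in> {1} \<and> X k \<omega> \<in> {x<..}}" for k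
  have A_sets: "A k \<in> events" if "k \<in> U" for k
    unfolding A_def using X_rv[OF that] I_rv[OF that] by measurable
  have "prob {\<omega> \<in> space M. (\<Sum>i\<in>U. I i \<omega> * X i \<omega>) > x} \<le> prob (\<Union>k\<in>U. A k)"
  proof (rule finite_measure_mono_AE)
    show "(\<Union>k\<in>U. A k) \<in> events"
      using A_sets U by auto
    show "AE \<omega> in M. \<omega> \<in> {\<omega> \<in> space M. (\<Sum>i\<in>U. I i \<omega> * X i \<omega>) > x} \<longrightarrow> \<omega> \<in> (\<Union>k\<in>U. A k)"
      using I_cat
    proof eventually_elim
      case (elim \<omega>)
      then obtain k where k: "k \<in> U" "I k \<omega> = 1" "\<forall>j\<in>U. j \<noteq> k \<longrightarrow> I j \<omega> = 0"
        by auto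
      have "(\<Sum>i\<in>U. I i \<omega> * X i \<omega>) = I k \<omega> * X k \<omega> + (\<Sum>i\<in>U - {k}. I i \<omega> * X i \<omega>)"
        using U k by (intro sum.remove)
      also have "\<dots> = X k \<omega>"
        using k by (simp add: sum.neutral)
      finally show ?case
        using k unfolding A_def by auto
    qed
  qed
  also have "\<dots> \<le> (\<Sum>k\<in>U. prob (A k))"
    using A_sets U by (intro finite_measure_subadditive_finite) auto
  also have "\<dots> = (\<Sum>k\<in>U. \<theta> k * prob {\<omega> \<in> space M. X k \<omega> > x})"
  proof (rule sum.cong[OF refl])
    fix k assume k: "k \<in> U"
    have "prob (A k) = prob {\<omega> \<in> space M. I k \<omega> \<in> {1}} * prob {\<omega> \<in> space M. X k \<omega> \<in> {x<..}}"
      unfolding A_def using I_indep k by (rule prob_indep_vectors_component) auto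
    then show "prob (A k) = \<theta> k * prob {\<omega> \<in> space M. X k \<omega> > x}"
      using I_prob[OF k] by simp
  qed
  finally show ?thesis .
qed

context
  fixes T :: "real set" and x :: real and Y :: "'a \<Rightarrow> real"
  assumes finite_T: "finite T" and T_bounds: "\<And>t. t \<in> T \<Longrightarrow> 0 < t \<and> t \<le> 1"
    and x_nonneg: "0 \<le> x" and Y_meas: "Y \<in> borel_measurable M"
begin

lemma level_comp_measurable: "(\<lambda>\<omega>. level T x (Y \<omega>)) \<in> borel_measurable M"
  using Y_meas level_measurable[OF finite_T] by (rule measurable_compose)

lemma sum_prob_level_eq: "(\<Sum>v\<in>insert 2 T. prob {\<omega> \<in> space M. level T x (Y \<omega>) = v}) = 1"
proof -
  have "{\<omega> \<in> space M. level T x (Y \<omega>) \<in> insert 2 T} = space M"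
    using level_in[OF finite_T T_bounds x_nonneg] by auto
  then show ?thesis
    using finite_T level_comp_measurable by (simp add: sum_prob_eq prob_space)
qed

lemma sum_prob_level_le:
  assumes "t \<in> T"
  shows "(\<Sum>v\<in>{v\<in>insert 2 T. v \<le> t}. prob {\<omega> \<in> space M. level T x (Y \<omega>) = v})
    = prob {\<omega> \<in> space M. Y \<omega> > x / t}"
proof -
  have "{\<omega> \<in> space M. level T x (Y \<omega>) \<in> {v\<in>insert 2 T. v \<le> t}} = {\<omega> \<in> space M. Y \<omega> > x / t}"
    using level_in[OF finite_T T_bounds x_nonneg] level_le_iff[OF finite_T T_bounds x_nonneg assms]
    by auto
  then show ?thesis
    using finite_T level_comp_measurable by (simp add: sum_prob_eq)
qed

end

context
  fixes U :: "nat set" and \<theta> :: "nat \<Rightarrow> real" and x :: real and X :: "nat \<Rightarrow> 'a \<Rightarrow> real"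
  assumes finite_U: "finite U" and theta_pos: "\<And>i. i \<in> U \<Longrightarrow> 0 < \<theta> i"
    and theta_total: "theta_sum \<theta> U = 1" and x_nonneg: "0 \<le> x"
begin

lemma weighted_tail_sum_le_prob_some_good_subset:
  assumes U_ne: "U \<noteq> {}" and X_indep: "indep_vars (\<lambda>_. borel) X U"
    and tail: "\<And>i \<mu>. i \<in> \<mu> \<Longrightarrow> \<mu> \<subseteq> U \<Longrightarrow>
      theta_sum \<theta> \<mu> * prob {\<omega> \<in> space M. X i \<omega> > x} \<le> prob {\<omega> \<in> space M. X i \<omega> > x / theta_sum \<theta> \<mu>}"
  shows "(\<Sum>i\<in>U. \<theta> i * prob {\<omega> \<in> space M. X i \<omega> > x})
    \<le> prob {\<omega> \<in> space M. \<not> no_good_subset \<theta> U 0 (\<lambda>i\<in>U. level (thresholds U \<theta> i) x (X i \<omega>))}"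
proof -
  let ?V = "\<lambda>i. insert 2 (thresholds U \<theta> i)"
  let ?w = "\<lambda>i v. prob {\<omega> \<in> space M. level (thresholds U \<theta> i) x (X i \<omega>) = v}"
  note finite_thresholds = finite_thresholds[OF finite_U theta_pos theta_total]
  note thresholds_bounds = thresholds_bounds[OF finite_U theta_pos theta_total]
  have X_meas: "X i \<in> borel_measurable M" if "i \<in> U" for i
    using X_indep that unfolding indep_vars_def by auto
  have "(\<Sum>i\<in>U. \<theta> i * prob {\<omega> \<in> space M. X i \<omega> > x})
      \<le> prod_expectation U ?V ?w (\<lambda>l. of_bool (\<not> no_good_subset \<theta> U 0 l))"
  proof (rule weighted_sum_le_prod_expectation_some_good_subset[OF finite_U theta_pos theta_total])
    show "(\<Sum>v\<in>?V i. ?w i v) = 1" if "i \<in> U" for i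
      using finite_thresholds thresholds_bounds x_nonneg X_meas[OF that] by (rule sum_prob_level_eq)
    show "prob {\<omega> \<in> space M. X i \<omega> > x} * t \<le> (\<Sum>v\<in>{v \<in> ?V i. v \<le> t}. ?w i v)"
      if i: "i \<in> U" and t: "t \<in> thresholds U \<theta> i" for i t
    proof -
      obtain \<mu> where \<mu>: "i \<in> \<mu>" "\<mu> \<subseteq> U" "t = theta_sum \<theta> \<mu>"
        using t unfolding thresholds_def by blast
      then show ?thesis
        using tail[OF \<mu>(1,2)]
          sum_prob_level_le[OF finite_thresholds thresholds_bounds x_nonneg X_meas[OF i] t]
        by (simp add: mult.commute)
    qed
  qed auto
  also have "\<dots>
      = prob {\<omega> \<in> space M. \<not> no_good_subset \<theta> U 0 (\<lambda>i\<in>U. level (thresholds U \<theta> i) x (X i \<omega>))}"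
  proof (rule prob_indep_vars_finite_range[symmetric, OF _ finite_U U_ne])
    show "indep_vars (\<lambda>_. borel) (\<lambda>i \<omega>. level (thresholds U \<theta> i) x (X i \<omega>)) U"
      using X_indep level_measurable[OF finite_thresholds] by (rule indep_vars_compose2)
    show "level (thresholds U \<theta> i) x (X i \<omega>) \<in> ?V i" for i \<omega>
      using finite_thresholds thresholds_bounds x_nonneg by (rule level_in)
  qed (use finite_thresholds in simp)
  finally show ?thesis .
qed

lemma prob_some_good_subset_le_prob_weighted_sum_gt:
  assumes X_meas: "\<And>i. i \<in> U \<Longrightarrow> X i \<in> borel_measurable M"
    and X_nonneg: "\<And>i. i \<in> U \<Longrightarrow> AE \<omega> in M. 0 \<le> X i \<omega>"
  shows "prob {\<omega> \<in> space M. \<not> no_good_subset \<theta> U 0 (\<lambda>i\<in>U. level (thresholds U \<theta> i) x (X i \<omega>))}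
    \<le> prob {\<omega> \<in> space M. (\<Sum>i\<in>U. \<theta> i * X i \<omega>) > x}"
proof -
  note finite_thresholds = finite_thresholds[OF finite_U theta_pos theta_total]
  note thresholds_bounds = thresholds_bounds[OF finite_U theta_pos theta_total]
  have "x < (\<Sum>i\<in>U. \<theta> i * X i \<omega>)"
    if nonneg: "\<forall>i\<in>U. 0 \<le> X i \<omega>"
      and some_good: "\<not> no_good_subset \<theta> U 0 (\<lambda>i\<in>U. level (thresholds U \<theta> i) x (X i \<omega>))" for \<omega>
  proof -
    obtain \<nu> where \<nu>: "\<nu> \<subseteq> U" "\<nu> \<noteq> {}" "good_set \<theta> 0 \<nu> (\<lambda>i\<in>U. level (thresholds U \<theta> i) x (X i \<omega>))"
      using some_good unfolding no_good_subset_def by auto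
    have big: "x / theta_sum \<theta> \<nu> < X i \<omega>" if i: "i \<in> \<nu>" for i
    proof -
      have t: "theta_sum \<theta> \<nu> \<in> thresholds U \<theta> i"
        using \<nu>(1) i unfolding thresholds_def by auto
      have "i \<in> U"
        using \<nu>(1) i by auto
      then have "level (thresholds U \<theta> i) x (X i \<omega>) \<le> theta_sum \<theta> \<nu>"
        using \<nu>(3) i unfolding good_set_def by auto
      then show ?thesis
        using level_le_iff[OF finite_thresholds thresholds_bounds x_nonneg t] by simp
    qed
    show ?thesis
      using nonneg by (intro less_sum_of_good_set[OF finite_U \<nu>(1,2) theta_pos _ big]) auto
  qed
  moreover have "AE \<omega> in M. \<forall>i\<in>U. 0 \<le> X i \<omega>"
    using X_nonneg finite_U by (simp add: AE_finite_all)
  ultimately have "AE \<omega> in M.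
      \<omega> \<in> {\<omega> \<in> space M. \<not> no_good_subset \<theta> U 0 (\<lambda>i\<in>U. level (thresholds U \<theta> i) x (X i \<omega>))}
      \<longrightarrow> \<omega> \<in> {\<omega> \<in> space M. (\<Sum>i\<in>U. \<theta> i * X i \<omega>) > x}"
    by auto
  then show ?thesis
    by (rule finite_measure_mono_AE) (use X_meas in measurable)
qed

end

lemma weighted_tail_sum_le_prob_weighted_sum_gt:
  fixes X :: "nat \<Rightarrow> 'a \<Rightarrow> real"
  assumes U: "finite U" "U \<noteq> {}" and theta_pos: "\<And>i. i \<in> U \<Longrightarrow> 0 < \<theta> i"
    and theta_total: "theta_sum \<theta> U = 1"
    and X_indep: "indep_vars (\<lambda>_. borel) X U"
    and X_nonneg: "\<And>i. i \<in> U \<Longrightarrow> AE \<omega> in M. 0 \<le> X i \<omega>"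
    and tail: "\<And>i \<mu>. i \<in> \<mu> \<Longrightarrow> \<mu> \<subset> U \<Longrightarrow> 0 \<le> x \<Longrightarrow>
      theta_sum \<theta> \<mu> * prob {\<omega> \<in> space M. X i \<omega> > x} \<le> prob {\<omega> \<in> space M. X i \<omega> > x / theta_sum \<theta> \<mu>}"
  shows "(\<Sum>i\<in>U. \<theta> i * prob {\<omega> \<in> space M. X i \<omega> > x}) \<le> prob {\<omega> \<in> space M. (\<Sum>i\<in>U. \<theta> i * X i \<omega>) > x}"
proof -
  have X_meas: "\<And>i. i \<in> U \<Longrightarrow> X i \<in> borel_measurable M"
    using X_indep unfolding indep_vars_def by auto
  show ?thesis
  proof (cases "0 \<le> x")
    case True
    have "theta_sum \<theta> \<mu> * prob {\<omega> \<in> space M. X i \<omega> > x}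
        \<le> prob {\<omega> \<in> space M. X i \<omega> > x / theta_sum \<theta> \<mu>}"
      if "i \<in> \<mu>" "\<mu> \<subseteq> U" for i \<mu>
      using that tail[OF that(1) _ True] theta_total by (cases "\<mu> = U") auto
    with U(1) theta_pos theta_total True U(2) X_indep
    have "(\<Sum>i\<in>U. \<theta> i * prob {\<omega> \<in> space M. X i \<omega> > x})
      \<le> prob {\<omega> \<in> space M. \<not> no_good_subset \<theta> U 0 (\<lambda>i\<in>U. level (thresholds U \<theta> i) x (X i \<omega>))}"
      by (rule weighted_tail_sum_le_prob_some_good_subset)
    also have "\<dots> \<le> prob {\<omega> \<in> space M. (\<Sum>i\<in>U. \<theta> i * X i \<omega>) > x}"
      using U(1) theta_pos theta_total True X_meas X_nonneg
      by (rule prob_some_good_subset_le_prob_weighted_sum_gt)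
    finally show ?thesis .
  next
    case False
    have "(\<Sum>i\<in>U. \<theta> i * prob {\<omega> \<in> space M. X i \<omega> > x}) \<le> (\<Sum>i\<in>U. \<theta> i)"
      using theta_pos by (intro sum_mono) (simp add: less_imp_le mult_left_le)
    also have "\<dots> = prob {\<omega> \<in> space M. (\<Sum>i\<in>U. \<theta> i * X i \<omega>) > x}"
      using U(1) X_meas X_nonneg theta_pos False theta_total
      by (subst prob_nonneg_weighted_sum_gt_neg) (auto simp: theta_sum_def less_imp_le)
    finally show ?thesis .
  qed
qed

end

theorem theorem2:
  fixes M :: "'a measure" and n :: nat
    and X :: "nat \<Rightarrow> 'a \<Rightarrow> real" and I :: "nat \<Rightarrow> 'a \<Rightarrow> real"
    and \<theta> :: "nat \<Rightarrow> real"
  assumes P: "prob_space M"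
    and n: "n \<ge> 2"
    and X_rv: "\<And>i. i \<in> {1..n} \<Longrightarrow> X i \<in> borel_measurable M"
    and X_indep: "prob_space.indep_vars M (\<lambda>_. borel) X {1..n}"
    and X_nonneg: "\<And>i. i \<in> {1..n} \<Longrightarrow> AE \<omega> in M. X i \<omega> \<ge> 0"
    and theta_range: "\<And>i. i \<in> {1..n} \<Longrightarrow> 0 < \<theta> i \<and> \<theta> i < 1"
    and theta_sum1: "(\<Sum>i=1..n. \<theta> i) = 1"
    and I_rv: "\<And>i. i \<in> {1..n} \<Longrightarrow> I i \<in> borel_measurable M"
    and I_cat: "AE \<omega> in M. \<exists>i\<in>{1..n}. I i \<omega> = 1 \<and> (\<forall>j\<in>{1..n}. j \<noteq> i \<longrightarrow> I j \<omega> = 0)"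
    and I_prob: "\<And>i. i \<in> {1..n} \<Longrightarrow> measure M {\<omega> \<in> space M. I i \<omega> = 1} = \<theta> i"
    and I_indep: "prob_space.indep_var M
        (PiM {1..n} (\<lambda>_. borel)) (\<lambda>\<omega>. \<lambda>i\<in>{1..n}. I i \<omega>)
        (PiM {1..n} (\<lambda>_. borel)) (\<lambda>\<omega>. \<lambda>i\<in>{1..n}. X i \<omega>)"
    and cond: "\<And>i \<mu> x. i \<in> {1..n} \<Longrightarrow> i \<in> \<mu> \<Longrightarrow> \<mu> \<subset> {1..n} \<Longrightarrow> x \<ge> 0 \<Longrightarrow>
        theta_sum \<theta> \<mu> * measure M {\<omega> \<in> space M. X i \<omega> > x}
          \<le> measure M {\<omega> \<in> space M. X i \<omega> > x / theta_sum \<theta> \<mu>}"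
  shows "\<forall>x::real. measure M {\<omega> \<in> space M. (\<Sum>i=1..n. I i \<omega> * X i \<omega>) > x}
                 \<le> measure M {\<omega> \<in> space M. (\<Sum>i=1..n. \<theta> i * X i \<omega>) > x}"
proof
  fix x :: real
  interpret prob_space M
    by (rule P)
  have U: "finite {1..n}" "{1..n} \<noteq> {}"
    using n by auto
  have "prob {\<omega> \<in> space M. (\<Sum>i=1..n. I i \<omega> * X i \<omega>) > x}
      \<le> (\<Sum>i=1..n. \<theta> i * prob {\<omega> \<in> space M. X i \<omega> > x})"
    using U(1) X_rv I_rv I_cat I_prob I_indep by (rule prob_mixture_gt_le)
  also have "\<dots> \<le> prob {\<omega> \<in> space M. (\<Sum>i=1..n. \<theta> i * X i \<omega>) > x}"
  proof (rule weighted_tail_sum_le_prob_weighted_sum_gt[OF U _ _ X_indep X_nonneg])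
    show "theta_sum \<theta> {1..n} = 1"
      using theta_sum1 by (simp add: theta_sum_def)
    show "0 < \<theta> i" if "i \<in> {1..n}" for i
      using theta_range[OF that] by simp
    show "theta_sum \<theta> \<mu> * prob {\<omega> \<in> space M. X i \<omega> > x}
        \<le> prob {\<omega> \<in> space M. X i \<omega> > x / theta_sum \<theta> \<mu>}"
      if "i \<in> \<mu>" "\<mu> \<subset> {1..n}" "0 \<le> x" for i \<mu>
      using that by (intro cond) auto
  qed
  finally show "prob {\<omega> \<in> space M. (\<Sum>i=1..n. I i \<omega> * X i \<omega>) > x}
      \<le> prob {\<omega> \<in> space M. (\<Sum>i=1..n. \<theta> i * X i \<omega>) > x}" .
qed

end
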